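(* For each of the rules (N1)–(N4), (P1)–(P4) below, if a rule reduces a dynamic implication $\varGamma\Rightarrow\varPhi$ to implications $\varGamma_i\Rightarrow\varPhi_i$ ($1\le i\le n$) and $\varGamma_i\vDash\varPhi_i$ for all $i$, then $\varGamma\vDash\varPhi$. Consequently, if $\varGamma\vdash_{\mathrm{dyn}}\varPhi$ then $\varGamma\vDash\varPhi$.
   Context: Assignments, literals, substitutions ($\sigma(\top)=\top$, $\sigma(\overline l)=\overline{\sigma(l)}$; finite if almost everywhere identity on variables) and $I\circ\sigma$ (with $(I\circ\sigma)(x)=1$ iff $I\vDash\sigma(x)$) as usual. Static constraints form a family with: a constraint for each literal; a negation $\overline C$ ($I\vDash\overline C$ iff $I\not\vDash C$); reducts $C[\sigma]$ ($I\vDash C[\sigma]$ iff $I\circ\sigma\vDash C$); and a conflict-detection predicate $\vdash_\bot F$ on finite sets of static constraints which is sound ($\vdash_\bot F$ implies $F$ unsatisfiable), holds whenever $F$ contains $\bot$ or both $C$ and $\overline C$, and is monotone under supersets. Program items: $\langle\sigma\rangle$ ($J=I\circ\sigma$), $T?$ ($I\vDash T$ and $J=I$), $\varepsilon_1\sqcup\varepsilon_2$ ($I\otimes J\vDash\varepsilon_1$ or $I\otimes J\vDash\varepsilon_2$), $\mathrm{if}\ T\ \mathrm{then}\ \varepsilon_1\parallel\varepsilon_0$ (as $\varepsilon_1$ if $I\vDash T$, as $\varepsilon_0$ otherwise); programs are finite lists of items with sequential composition semantics ($[\,]$ is the empty program). A dynamic constraint $\varepsilon.C$ ($\varepsilon$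 program, $C$ static) holds at $I$ iff $J\vDash C$ whenever $I\otimes J\vDash\varepsilon$; dynamic formulas are finite sets of dynamic constraints interpreted conjunctively. For a program $\delta$: $\delta.(\varepsilon.C)=(\delta\varepsilon).C$ and $\delta.\varGamma=\{\delta.\varPhi:\varPhi\in\varGamma\}$. A static constraint $T$ is identified with $[\,].T$. For a dynamic constraint $\varPhi$ and finite substitution $\sigma$, $\varPhi[\sigma]$ denotes its reduct, a dynamic constraint satisfying $I\vDash\varPhi[\sigma]$ iff $I\circ\sigma\vDash\varPhi$ for all $I$, with $([\,].C)[\sigma]=[\,].C[\sigma]$; $\varDelta[\sigma]=\{\varPhi[\sigma]:\varPhi\in\varDelta\}$. A dynamic implication $\varGamma\Rightarrow\varPhi$ has $\varGamma$ a dynamic formula and $\varPhi$ a dynamic constraint. Rules ($\varGamma,\varDelta$ dynamic formulas, $\varPhi$ dynamic constraint, $T$ static, $\varepsilon_i$ programs): (N1) $\varGamma\Rightarrow\langle\sigma\rangle.\varPhi$ reduces to $\varGamma\Rightarrow\varPhi[\sigma]$; (N2) $\varGamma\Rightarrow(\varepsilon_1\sqcup\varepsilon_2).\varPhi$ reduces to $\varGamma\Rightarrow\varepsilon_1.\varPhi$ and $\varGamma\Rightarrow\varepsilon_2.\varPhi$; (N3) $\varGamma\Rightarrow T?.\varPhi$ reduces to $\varGamma\cup\{T\}\Rightarrow\varPhi$; (N4) $\varGamma\Rightarrow(\mathrm{if}\ T\ \mathrm{then}\ \varepsilon_1\parallel\varepsilon_0).\varPhi$ reduces to $\varGamma\cup\{T\}\Rightarrow\varepsilon_1.\varPhi$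 and $\varGamma\cup\{\overline T\}\Rightarrow\varepsilon_0.\varPhi$; (P1) $\varGamma\cup\langle\sigma\rangle.\varDelta\Rightarrow\varPhi$ reduces to $\varGamma\cup\varDelta[\sigma]\Rightarrow\varPhi$; (P2) $\varGamma\cup(\varepsilon_1\sqcup\varepsilon_2).\varDelta\Rightarrow\varPhi$ reduces to $\varGamma\cup\varepsilon_1.\varDelta\cup\varepsilon_2.\varDelta\Rightarrow\varPhi$; (P3) $\varGamma\cup T?.\varDelta\Rightarrow\varPhi$ reduces to $\varGamma\cup\varDelta\cup\{T\}\Rightarrow\varPhi$ and $\varGamma\cup\{\overline T\}\Rightarrow\varPhi$; (P4) $\varGamma\cup(\mathrm{if}\ T\ \mathrm{then}\ \varepsilon_1\parallel\varepsilon_0).\varDelta\Rightarrow\varPhi$ reduces to $\varGamma\cup\varepsilon_1.\varDelta\cup\{T\}\Rightarrow\varPhi$ and $\varGamma\cup\varepsilon_0.\varDelta\cup\{\overline T\}\Rightarrow\varPhi$. We write $\varGamma\vdash_{\mathrm{dyn}}\varPhi$ if, by finitely many applications of these rules, $\varGamma\Rightarrow\varPhi$ can be reduced to implications $[\,].F_i\Rightarrow[\,].C_i$ ($1\le i\le n$) with all constraints having empty context ($F_i$ static formulas, $C_i$ static constraints) such that $\vdash_\bot F_i\cup\{\overline{C_i}\}$ for every $i$. *)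

theory Defs
  imports Main
begin

datatype 'v lit = Top | Bot | Pos 'v | Neg 'v

fun compl :: "'v lit \<Rightarrow> 'v lit" where
  "compl Top = Bot" | "compl Bot = Top" | "compl (Pos x) = Neg x" | "compl (Neg x) = Pos x"

type_synonym 'v asg = "'v \<Rightarrow> bool"
type_synonym 'v subst = "'v \<Rightarrow> 'v lit"

fun lsat :: "'v asg \<Rightarrow> 'v lit \<Rightarrow> bool" where
  "lsat I Top = True" | "lsat I Bot = False" | "lsat I (Pos x) = I x" | "lsat I (Neg x) = (\<not> I x)"

fun subst_lit :: "'v subst \<Rightarrow> 'v lit \<Rightarrow> 'v lit" where
  "subst_lit \<sigma> Top = Top" | "subst_lit \<sigma> Bot = Bot"
| "subst_lit \<sigma> (Pos x) = \<sigma> x" | "subst_lit \<sigma> (Neg x) = compl (\<sigma> x)"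

definition finite_subst :: "'v subst \<Rightarrow> bool" where
  "finite_subst \<sigma> \<longleftrightarrow> finite {x. \<sigma> x \<noteq> Pos x}"

definition comp_asg :: "'v asg \<Rightarrow> 'v subst \<Rightarrow> 'v asg" where
  "comp_asg I \<sigma> = (\<lambda>x. lsat I (\<sigma> x))"

record ('v, 'c) scfam =
  ssat  :: "'v asg \<Rightarrow> 'c \<Rightarrow> bool"
  litc  :: "'v lit \<Rightarrow> 'c"
  sneg  :: "'c \<Rightarrow> 'c"
  sred  :: "'c \<Rightarrow> 'v subst \<Rightarrow> 'c"
  confl :: "'c set \<Rightarrow> bool"

definition static_family :: "('v, 'c) scfam \<Rightarrow> bool" where
  "static_family S \<longleftrightarrow>
     (\<forall>I l. ssat S I (litc S l) = lsat I l)
   \<and> (\<forall>I C. ssat S I (sneg S C) = (\<not> ssat S I C))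
   \<and> (\<forall>I C \<sigma>. ssat S I (sred S C \<sigma>) = ssat S (comp_asg I \<sigma>) C)
   \<and> (\<forall>F. finite F \<longrightarrow> confl S F \<longrightarrow> \<not> (\<exists>I. \<forall>C\<in>F. ssat S I C))
   \<and> (\<forall>F. finite F \<longrightarrow> litc S Bot \<in> F \<longrightarrow> confl S F)
   \<and> (\<forall>F C. finite F \<longrightarrow> C \<in> F \<longrightarrow> sneg S C \<in> F \<longrightarrow> confl S F)
   \<and> (\<forall>F G. finite G \<longrightarrow> F \<subseteq> G \<longrightarrow> confl S F \<longrightarrow> confl S G)"

datatype ('v, 'c) item =
    Subst "'v subst"
  | Test 'c
  | Choice "('v, 'c) item list" "('v, 'c) item list"
  | Ite 'c "('v, 'c) item list" "('v, 'c) item list"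

type_synonym ('v, 'c) prog = "('v, 'c) item list"

inductive exec_it :: "('v, 'c) scfam \<Rightarrow> ('v, 'c) item \<Rightarrow> 'v asg \<Rightarrow> 'v asg \<Rightarrow> bool"
  and exec_pr :: "('v, 'c) scfam \<Rightarrow> ('v, 'c) prog \<Rightarrow> 'v asg \<Rightarrow> 'v asg \<Rightarrow> bool"
  for S :: "('v, 'c) scfam" where
  "exec_it S (Subst \<sigma>) I (comp_asg I \<sigma>)"
| "ssat S I T \<Longrightarrow> exec_it S (Test T) I I"
| "exec_pr S e1 I J \<Longrightarrow> exec_it S (Choice e1 e2) I J"
| "exec_pr S e2 I J \<Longrightarrow> exec_it S (Choice e1 e2) I J"
| "ssat S I T \<Longrightarrow> exec_pr S e1 I J \<Longrightarrow> exec_it S (Ite T e1 e0) I J"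
| "\<not> ssat S I T \<Longrightarrow> exec_pr S e0 I J \<Longrightarrow> exec_it S (Ite T e1 e0) I J"
| "exec_pr S [] I I"
| "exec_it S a I K \<Longrightarrow> exec_pr S p K J \<Longrightarrow> exec_pr S (a # p) I J"

text \<open>A dynamic constraint eps.C is the pair (eps, C); static T is identified with ([], T).\<close>
type_synonym ('v, 'c) dcon = "('v, 'c) prog \<times> 'c"

fun dsat :: "('v, 'c) scfam \<Rightarrow> 'v asg \<Rightarrow> ('v, 'c) dcon \<Rightarrow> bool" where
  "dsat S I (e, C) \<longleftrightarrow> (\<forall>J. exec_pr S e I J \<longrightarrow> ssat S J C)"

definition entails :: "('v, 'c) scfam \<Rightarrow> ('v, 'c) dcon set \<Rightarrow> ('v, 'c) dcon \<Rightarrow> bool" where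
  "entails S \<Gamma> \<Phi> \<longleftrightarrow> (\<forall>I. (\<forall>\<Psi>\<in>\<Gamma>. dsat S I \<Psi>) \<longrightarrow> dsat S I \<Phi>)"

definition pre :: "('v, 'c) prog \<Rightarrow> ('v, 'c) dcon set \<Rightarrow> ('v, 'c) dcon set" where
  "pre d \<Delta> = (\<lambda>(e, C). (d @ e, C)) ` \<Delta>"

definition stat :: "'c \<Rightarrow> ('v, 'c) dcon" where
  "stat C = ([], C)"

definition is_dred :: "('v, 'c) scfam \<Rightarrow> (('v, 'c) dcon \<Rightarrow> 'v subst \<Rightarrow> ('v, 'c) dcon) \<Rightarrow> bool" where
  "is_dred S dred \<longleftrightarrow> (\<forall>\<sigma>. finite_subst \<sigma> \<longrightarrow>
      (\<forall>\<Phi> I. dsat S I (dred \<Phi> \<sigma>) = dsat S (comp_asg I \<sigma>) \<Phi>)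
    \<and> (\<forall>C. dred ([], C) \<sigma> = ([], sred S C \<sigma>)))"

text \<open>red_step S dred G Phi L: a rule reduces G => Phi to the implications in L.
  The reduct Phi[sigma] is only available for finite sigma.\<close>
inductive red_step :: "('v, 'c) scfam \<Rightarrow> (('v, 'c) dcon \<Rightarrow> 'v subst \<Rightarrow> ('v, 'c) dcon)
    \<Rightarrow> ('v, 'c) dcon set \<Rightarrow> ('v, 'c) dcon \<Rightarrow> (('v, 'c) dcon set \<times> ('v, 'c) dcon) list \<Rightarrow> bool"
  for S dred where
  N1: "finite G \<Longrightarrow> finite_subst \<sigma> \<Longrightarrow>
     red_step S dred G (Subst \<sigma> # e, C) [(G, dred (e, C) \<sigma>)]"
| N2: "finite G \<Longrightarrow>
     red_step S dred G (Choice e1 e2 # e, C) [(G, (e1 @ e, C)), (G, (e2 @ e, C))]"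
| N3: "finite G \<Longrightarrow>
     red_step S dred G (Test T # e, C) [(G \<union> {stat T}, (e, C))]"
| N4: "finite G \<Longrightarrow>
     red_step S dred G (Ite T e1 e0 # e, C)
       [(G \<union> {stat T}, (e1 @ e, C)), (G \<union> {stat (sneg S T)}, (e0 @ e, C))]"
| P1: "finite \<Gamma> \<Longrightarrow> finite \<Delta> \<Longrightarrow> finite_subst \<sigma> \<Longrightarrow>
     red_step S dred (\<Gamma> \<union> pre [Subst \<sigma>] \<Delta>) \<Phi> [(\<Gamma> \<union> (\<lambda>\<Psi>. dred \<Psi> \<sigma>) ` \<Delta>, \<Phi>)]"
| P2: "finite \<Gamma> \<Longrightarrow> finite \<Delta> \<Longrightarrow>
     red_step S dred (\<Gamma> \<union> pre [Choice e1 e2] \<Delta>) \<Phi> [(\<Gamma> \<union> pre e1 \<Delta> \<union> pre e2 \<Delta>, \<Phi>)]"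
| P3: "finite \<Gamma> \<Longrightarrow> finite \<Delta> \<Longrightarrow>
     red_step S dred (\<Gamma> \<union> pre [Test T] \<Delta>) \<Phi>
       [(\<Gamma> \<union> \<Delta> \<union> {stat T}, \<Phi>), (\<Gamma> \<union> {stat (sneg S T)}, \<Phi>)]"
| P4: "finite \<Gamma> \<Longrightarrow> finite \<Delta> \<Longrightarrow>
     red_step S dred (\<Gamma> \<union> pre [Ite T e1 e0] \<Delta>) \<Phi>
       [(\<Gamma> \<union> pre e1 \<Delta> \<union> {stat T}, \<Phi>), (\<Gamma> \<union> pre e0 \<Delta> \<union> {stat (sneg S T)}, \<Phi>)]"

inductive derivable :: "('v, 'c) scfam \<Rightarrow> (('v, 'c) dcon \<Rightarrow> 'v subst \<Rightarrow> ('v, 'c) dcon)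
    \<Rightarrow> ('v, 'c) dcon set \<Rightarrow> ('v, 'c) dcon \<Rightarrow> bool"
  for S dred where
  leaf: "finite F \<Longrightarrow> confl S (F \<union> {sneg S C}) \<Longrightarrow> derivable S dred (stat ` F) (stat C)"
| step: "red_step S dred G \<Phi> L \<Longrightarrow> (\<forall>(G', \<Phi>') \<in> set L. derivable S dred G' \<Phi>') \<Longrightarrow>
     derivable S dred G \<Phi>"
monos list.pred_mono_strong

end

theory Submission
  imports Defs
begin

text \<open>Every rule eliminates a leading program item using its one-step semantics: a substitution
  becomes a reduct, a choice both branches, a test or conditional a case split on the test. Since
  these unfoldings are equivalences at each assignment, the premises of a rule entail its
  conclusion. Soundness of derivability then follows by induction, the leaves being sound because
  conflict detection is.\<close>

lemma exec_pr_Nil_iff: "exec_pr S [] I J \<longleftrightarrow> J = I"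
  by (auto elim: exec_pr.cases intro: exec_it_exec_pr.intros)

lemma exec_pr_Cons_iff: "exec_pr S (a # p) I J \<longleftrightarrow> (\<exists>K. exec_it S a I K \<and> exec_pr S p K J)"
  by (auto elim: exec_pr.cases intro: exec_it_exec_pr.intros)

lemma exec_pr_append_iff: "exec_pr S (p @ q) I J \<longleftrightarrow> (\<exists>K. exec_pr S p I K \<and> exec_pr S q K J)"
  by (induction p arbitrary: I) (auto simp: exec_pr_Nil_iff exec_pr_Cons_iff)

lemma exec_it_Subst_iff: "exec_it S (Subst \<sigma>) I K \<longleftrightarrow> K = comp_asg I \<sigma>"
  by (auto elim: exec_it.cases intro: exec_it_exec_pr.intros)

lemma exec_it_Test_iff: "exec_it S (Test T) I K \<longleftrightarrow> ssat S I T \<and> K = I"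
  by (auto elim: exec_it.cases intro: exec_it_exec_pr.intros)

lemma exec_it_Choice_iff: "exec_it S (Choice p q) I K \<longleftrightarrow> exec_pr S p I K \<or> exec_pr S q I K"
  by (auto elim: exec_it.cases intro: exec_it_exec_pr.intros)

lemma exec_it_Ite_iff:
  "exec_it S (Ite T p q) I K \<longleftrightarrow> (if ssat S I T then exec_pr S p I K else exec_pr S q I K)"
  by (auto elim: exec_it.cases intro: exec_it_exec_pr.intros)

lemma dsat_stat [simp]: "dsat S I (stat C) \<longleftrightarrow> ssat S I C"
  by (simp add: stat_def exec_pr_Nil_iff)

lemma dsat_Subst_Cons [simp]: "dsat S I (Subst \<sigma> # e, C) \<longleftrightarrow> dsat S (comp_asg I \<sigma>) (e, C)"
  by (auto simp: exec_pr_Cons_iff exec_it_Subst_iff)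

lemma dsat_Test_Cons [simp]: "dsat S I (Test T # e, C) \<longleftrightarrow> (ssat S I T \<longrightarrow> dsat S I (e, C))"
  by (auto simp: exec_pr_Cons_iff exec_it_Test_iff)

lemma dsat_Choice_Cons [simp]:
  "dsat S I (Choice p q # e, C) \<longleftrightarrow> dsat S I (p @ e, C) \<and> dsat S I (q @ e, C)"
  by (auto simp: exec_pr_Cons_iff exec_it_Choice_iff exec_pr_append_iff)

lemma dsat_Ite_Cons [simp]:
  "dsat S I (Ite T p q # e, C) \<longleftrightarrow> (if ssat S I T then dsat S I (p @ e, C) else dsat S I (q @ e, C))"
  by (auto simp: exec_pr_Cons_iff exec_it_Ite_iff exec_pr_append_iff)

declare dsat.simps [simp del]

definition dsat_all :: "('v, 'c) scfam \<Rightarrow> 'v asg \<Rightarrow> ('v, 'c) dcon set \<Rightarrow> bool" where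
  "dsat_all S I \<Gamma> \<longleftrightarrow> (\<forall>\<Psi>\<in>\<Gamma>. dsat S I \<Psi>)"

lemma entails_iff_dsat_all: "entails S \<Gamma> \<Phi> \<longleftrightarrow> (\<forall>I. dsat_all S I \<Gamma> \<longrightarrow> dsat S I \<Phi>)"
  by (simp add: entails_def dsat_all_def)

lemma dsat_all_Un [simp]: "dsat_all S I (\<Gamma> \<union> \<Delta>) \<longleftrightarrow> dsat_all S I \<Gamma> \<and> dsat_all S I \<Delta>"
  by (auto simp: dsat_all_def)

lemma dsat_all_insert [simp]: "dsat_all S I (insert \<Psi> \<Gamma>) \<longleftrightarrow> dsat S I \<Psi> \<and> dsat_all S I \<Gamma>"
  by (simp add: dsat_all_def)

lemma dsat_all_pre: "dsat_all S I (pre d \<Delta>) \<longleftrightarrow> (\<forall>(e, C)\<in>\<Delta>. dsat S I (d @ e, C))"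
  by (auto simp: dsat_all_def pre_def)

lemma dsat_all_pre_Choice [simp]:
  "dsat_all S I (pre [Choice p q] \<Delta>) \<longleftrightarrow> dsat_all S I (pre p \<Delta>) \<and> dsat_all S I (pre q \<Delta>)"
  by (auto simp: dsat_all_pre)

lemma dsat_all_pre_Test [simp]:
  "dsat_all S I (pre [Test T] \<Delta>) \<longleftrightarrow> (ssat S I T \<longrightarrow> dsat_all S I \<Delta>)"
  unfolding dsat_all_pre by (auto simp: dsat_all_def)

lemma dsat_all_pre_Ite [simp]:
  "dsat_all S I (pre [Ite T p q] \<Delta>) \<longleftrightarrow>
     (if ssat S I T then dsat_all S I (pre p \<Delta>) else dsat_all S I (pre q \<Delta>))"
  by (auto simp: dsat_all_pre)

lemma static_family_ssat_sneg [simp]: "static_family S \<Longrightarrow> ssat S I (sneg S C) \<longleftrightarrow> \<not> ssat S I C"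
  by (simp add: static_family_def)

lemma static_family_confl_unsat:
  assumes "static_family S" and "finite F" and "confl S F"
  shows "\<exists>C\<in>F. \<not> ssat S I C"
proof -
  from assms(1) have "\<forall>F. finite F \<longrightarrow> confl S F \<longrightarrow> \<not> (\<exists>I. \<forall>C\<in>F. ssat S I C)"
    by (simp add: static_family_def)
  with assms(2,3) show ?thesis by blast
qed

lemma is_dred_dsat:
  "is_dred S dred \<Longrightarrow> finite_subst \<sigma> \<Longrightarrow> dsat S I (dred \<Phi> \<sigma>) \<longleftrightarrow> dsat S (comp_asg I \<sigma>) \<Phi>"
  unfolding is_dred_def by blast

lemma is_dred_dsat_all:
  assumes "is_dred S dred" and "finite_subst \<sigma>"
  shows "dsat_all S I ((\<lambda>\<Psi>. dred \<Psi> \<sigma>) ` \<Delta>) \<longleftrightarrow> dsat_all S I (pre [Subst \<sigma>] \<Delta>)"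
  unfolding dsat_all_pre using is_dred_dsat[OF assms] by (auto simp: dsat_all_def)

lemma red_step_sound:
  assumes "static_family S" and "is_dred S dred"
    and "red_step S dred G \<Phi> L" and "\<forall>(G', \<Phi>') \<in> set L. entails S G' \<Phi>'"
  shows "entails S G \<Phi>"
  using assms(3)
proof cases
  case N1
  with assms(4) show ?thesis by (simp add: entails_iff_dsat_all is_dred_dsat[OF assms(2)])
next
  case N2
  with assms(4) show ?thesis by (simp add: entails_iff_dsat_all)
next
  case N3
  with assms(4) show ?thesis by (simp add: entails_iff_dsat_all)
next
  case N4
  with assms(4) show ?thesis by (simp add: entails_iff_dsat_all assms(1))
next
  case P1
  with assms(4) show ?thesis by (simp add: entails_iff_dsat_all is_dred_dsat_all[OF assms(2)])
next
  case P2
  with assms(4) show ?thesis by (simp add: entails_iff_dsat_all)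
next
  case P3
  with assms(4) show ?thesis by (auto simp: entails_iff_dsat_all assms(1))
next
  case P4
  with assms(4) show ?thesis by (auto simp: entails_iff_dsat_all assms(1))
qed

lemma derivable_sound:
  assumes "static_family S" and "is_dred S dred"
  shows "derivable S dred G \<Phi> \<Longrightarrow> entails S G \<Phi>"
proof (induction rule: derivable.induct)
  case (leaf F C)
  then have "\<exists>D\<in>F \<union> {sneg S C}. \<not> ssat S I D" for I
    by (intro static_family_confl_unsat[OF assms(1)]) simp_all
  then show ?case by (auto simp: entails_def assms(1))
next
  case (step G \<Phi> L)
  then show ?case by (intro red_step_sound[OF assms]) (auto simp: list_all_iff)
qed

theorem mainTheorem4:
  fixes S :: "('v, 'c) scfam"
    and dred :: "('v, 'c) dcon \<Rightarrow> 'v subst \<Rightarrow> ('v, 'c) dcon"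
  assumes "static_family S" and "is_dred S dred"
  shows "(\<forall>G \<Phi> L. red_step S dred G \<Phi> L \<longrightarrow> (\<forall>(G', \<Phi>') \<in> set L. entails S G' \<Phi>') \<longrightarrow> entails S G \<Phi>)
       \<and> (\<forall>G \<Phi>. finite G \<longrightarrow> derivable S dred G \<Phi> \<longrightarrow> entails S G \<Phi>)"
  using red_step_sound[OF assms] derivable_sound[OF assms] by blast

end
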